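(* Let $\mathcal{H}$ be a real or complex Hilbert space, $\Sigma\subset\mathcal{H}$ a cone, and $f:\mathcal{H}\to\mathbb{R}\cup\{+\infty\}$ a proper, coercive, continuous regularizer. Assume that for some $t>f(0)$ the level set $\mathcal{L}(f,t)=\{y\in\mathcal{H}:f(y)\le t\}$ is convex. Then there exists a family of atoms $\mathcal{A}\subset\Sigma$ such that $$\mathcal{T}_{\mathcal{A}}(\Sigma)\subset\mathbb{R}_+^*\cdot\mathcal{T}_f(\Sigma).$$
   Context: $\Sigma$ is a cone if $tz\in\Sigma$ for all $t\ge0$, $z\in\Sigma$. Coercive: $f(x)\to+\infty$ as $\|x\|_{\mathcal{H}}\to+\infty$. Atomic norm of $\mathcal{A}$: $\|x\|_{\mathcal{A}}=\inf\{s\ge0:x\in s\cdot\overline{\mathrm{conv}}(\mathcal{A})\}$ ($+\infty$ if none). Descent sets: $\mathcal{T}_f(\Sigma)=\bigcup_{x\in\Sigma}\{z:f(x+z)\le f(x)\}$ and $\mathcal{T}_{\mathcal{A}}(\Sigma)=\bigcup_{x\in\Sigma}\{z:\|x+z\|_{\mathcal{A}}\le\|x\|_{\mathcal{A}}\}$. $\mathbb{R}_+^*\cdot T=\{\lambda z:\lambda>0,z\in T\}$. *)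

theory Defs
  imports "HOL-Analysis.Analysis" "HOL-Library.Extended_Real"
begin

text \<open>Atomic norm: inf of s \<ge> 0 with x in s * closed convex hull of A; +\<infinity> if none (Inf {} = \<infinity>).\<close>
definition atomic_norm :: "'a::real_normed_vector set \<Rightarrow> 'a \<Rightarrow> ereal" where
  "atomic_norm A x = Inf {ereal s | s. s \<ge> 0 \<and> x \<in> (\<lambda>y. s *\<^sub>R y) ` closure (convex hull A)}"

definition descent_set_fun :: "('a::real_vector \<Rightarrow> ereal) \<Rightarrow> 'a set \<Rightarrow> 'a set" where
  "descent_set_fun f \<Sigma> = (\<Union>x\<in>\<Sigma>. {z. f (x + z) \<le> f x})"

definition descent_set_atoms :: "'a::real_normed_vector set \<Rightarrow> 'a set \<Rightarrow> 'a set" where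
  "descent_set_atoms A \<Sigma> = (\<Union>x\<in>\<Sigma>. {z. atomic_norm A (x + z) \<le> atomic_norm A x})"

definition pos_scale :: "'a::real_vector set \<Rightarrow> 'a set" where
  "pos_scale T = {l *\<^sub>R z | l z. l > 0 \<and> z \<in> T}"

end

theory Submission
  imports Defs
begin

text \<open>Take as atoms the part of \<open>\<Sigma>\<close> lying in the sublevel set \<open>L = {f \<le> t}\<close>, which is
closed, convex, bounded and a neighbourhood of \<open>0\<close>. The atomic norm is then the gauge of the
closed convex hull \<open>K \<subseteq> L\<close> of the atoms. For \<open>x \<in> \<Sigma> - {0}\<close> with atomic norm \<open>r\<close>, the point
\<open>x/r\<close> lies in \<open>L\<close> (as \<open>K\<close> is closed) but not in the interior of \<open>L\<close> along the ray (otherwise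
a smaller multiple of an atom would represent \<open>x\<close>), so \<open>f (x/r) = t\<close>. Hence if the atomic norm
does not increase from \<open>x\<close> to \<open>x + z\<close>, then \<open>f (x/r + z/r) \<le> t = f (x/r)\<close>, i.e. \<open>z/r\<close> is a
descent direction of \<open>f\<close> at \<open>x/r \<in> \<Sigma>\<close>.\<close>

lemma atomic_norm_nonneg: "0 \<le> atomic_norm A x"
  unfolding atomic_norm_def by (rule Inf_greatest) auto

lemma atomic_norm_le:
  assumes "0 \<le> s" "y \<in> closure (convex hull A)"
  shows "atomic_norm A (s *\<^sub>R y) \<le> ereal s"
  unfolding atomic_norm_def by (rule Inf_lower) (use assms in blast)

lemma atomic_norm_lessE:
  assumes "atomic_norm A x < ereal u"
  obtains s y where "0 \<le> s" "s < u" "y \<in> closure (convex hull A)" "x = s *\<^sub>R y"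
  using assms unfolding atomic_norm_def Inf_less_iff by auto

lemma norm_div_le_atomic_norm:
  assumes "A \<subseteq> cball 0 b" "0 < b"
  shows "ereal (norm x / b) \<le> atomic_norm A x"
  unfolding atomic_norm_def
proof (rule Inf_greatest)
  have K: "closure (convex hull A) \<subseteq> cball 0 b"
    using assms(1) by (intro closure_minimal hull_minimal) auto
  fix v assume "v \<in> {ereal s | s. 0 \<le> s \<and> x \<in> (\<lambda>y. s *\<^sub>R y) ` closure (convex hull A)}"
  then obtain s y where "v = ereal s" "0 \<le> s" "y \<in> closure (convex hull A)" "x = s *\<^sub>R y"
    by blast
  with K have "norm x \<le> s * b" by (auto intro!: mult_left_mono)
  with \<open>v = ereal s\<close> assms(2) show "ereal (norm x / b) \<le> v" by (simp add: divide_le_eq)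
qed

text \<open>The atomic norm is the gauge of the closed convex set \<open>closure (convex hull A)\<close>, which
contains its gauge-boundary because it is closed.\<close>
lemma atomic_norm_le_imp_scaled_mem:
  assumes zero: "0 \<in> closure (convex hull A)" and "0 < r" and le: "atomic_norm A x \<le> ereal r"
  shows "inverse r *\<^sub>R x \<in> closure (convex hull A)"
proof (rule Lim_in_closed_set[where F = "at_right r" and f = "\<lambda>u. inverse u *\<^sub>R x"])
  let ?K = "closure (convex hull A)"
  have scaled: "inverse u *\<^sub>R x \<in> ?K" if "r < u" for u
  proof -
    from le \<open>r < u\<close> have "atomic_norm A x < ereal u" by (simp add: order.strict_trans1)
    then obtain s y where sy: "0 \<le> s" "s < u" "y \<in> ?K" "x = s *\<^sub>R y"
      by (rule atomic_norm_lessE)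
    have "(s / u) *\<^sub>R y + (1 - s / u) *\<^sub>R 0 \<in> ?K"
      using sy \<open>0 < r\<close> \<open>r < u\<close> zero
      by (intro convexD[OF convex_closure[OF convex_convex_hull]]) auto
    with sy show ?thesis by (simp add: divide_inverse_commute)
  qed
  show "\<forall>\<^sub>F u in at_right r. inverse u *\<^sub>R x \<in> ?K"
    by (rule eventually_mono[OF eventually_at_right_less scaled])
  show "((\<lambda>u. inverse u *\<^sub>R x) \<longlongrightarrow> inverse r *\<^sub>R x) (at_right r)"
    using \<open>0 < r\<close> by (intro tendsto_intros) auto
qed auto

lemma coercive_sublevel_bounded:
  fixes f :: "'a::real_normed_vector \<Rightarrow> ereal"
  assumes "(f \<longlongrightarrow> \<infinity>) at_infinity"
  obtains b where "0 < b" "{y. f y \<le> ereal t} \<subseteq> cball 0 b"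
proof -
  have "\<forall>\<^sub>F y in at_infinity. ereal t < f y"
    using assms by (rule order_tendstoD) simp
  then obtain b where b: "\<And>y. b \<le> norm y \<Longrightarrow> ereal t < f y"
    unfolding eventually_at_infinity by blast
  have "{y. f y \<le> ereal t} \<subseteq> cball 0 (max b 1)"
    using b by (force simp: not_le[symmetric])
  then show ?thesis by (rule that[rotated]) simp
qed

lemma sublevel_contains_ball:
  fixes f :: "'a::real_normed_vector \<Rightarrow> ereal"
  assumes "continuous_on UNIV f" "f 0 < c"
  obtains e where "0 < e" "ball 0 e \<subseteq> {y. f y \<le> c}"
proof -
  have "open {y. f y < c}"
    using assms(1) by (intro open_Collect_less) auto
  with assms(2) obtain e where "0 < e" "ball 0 e \<subseteq> {y. f y < c}"
    by (auto simp: open_contains_ball)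
  then show ?thesis by (intro that) auto
qed

lemma atomic_norm_cone_sublevel_finite:
  assumes "cone \<Sigma>" "x \<in> \<Sigma>" "0 < e" "ball 0 e \<subseteq> L"
  shows "atomic_norm (\<Sigma> \<inter> L) x \<noteq> \<infinity>"
proof -
  define s where "s = 2 * (norm x + 1) / e"
  have "0 < norm x + 1" by (simp add: add_nonneg_pos)
  then have "0 < s" "norm (inverse s *\<^sub>R x) < e"
    using \<open>0 < e\<close> by (auto simp: s_def field_simps intro!: add_nonneg_pos)
  with assms \<open>0 < s\<close> have "inverse s *\<^sub>R x \<in> \<Sigma> \<inter> L"
    by (auto simp: cone_def)
  then have "atomic_norm (\<Sigma> \<inter> L) (s *\<^sub>R (inverse s *\<^sub>R x)) \<le> ereal s"
    using \<open>0 < s\<close> by (intro atomic_norm_le) (auto intro: closure_subset[THEN subsetD] hull_inc)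
  with \<open>0 < s\<close> show ?thesis by auto
qed

text \<open>If \<open>f (x/r) < t\<close>, continuity gives \<open>f (x/s) < t\<close> for \<open>s < r\<close> close to \<open>r\<close>, making
\<open>x/s\<close> an atom and forcing the atomic norm of \<open>x\<close> below \<open>r\<close>.\<close>
lemma sublevel_ge_at_atomic_norm:
  fixes f :: "'a::real_normed_vector \<Rightarrow> ereal"
  assumes "cone \<Sigma>" "x \<in> \<Sigma>" "continuous_on UNIV f" "0 < r"
    and r: "atomic_norm (\<Sigma> \<inter> {y. f y \<le> ereal t}) x = ereal r"
  shows "ereal t \<le> f (inverse r *\<^sub>R x)"
proof (rule ccontr)
  assume "\<not> ereal t \<le> f (inverse r *\<^sub>R x)"
  then have lt: "f (inverse r *\<^sub>R x) < ereal t" by simp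
  have "((\<lambda>s. f (inverse s *\<^sub>R x)) \<longlongrightarrow> f (inverse r *\<^sub>R x)) (at_left r)"
    using assms(3,4)
    by (intro isCont_tendsto_compose[where g = f] tendsto_intros)
       (auto simp: continuous_on_eq_continuous_at)
  then have "\<forall>\<^sub>F s in at_left r. f (inverse s *\<^sub>R x) < ereal t"
    using lt by (rule order_tendstoD)
  moreover have "\<forall>\<^sub>F s in at_left r. 0 < s \<and> s < r"
    using eventually_at_left_real[OF \<open>0 < r\<close>] by simp
  ultimately have "\<forall>\<^sub>F s in at_left r. False"
  proof eventually_elim
    case (elim s)
    then have "inverse s *\<^sub>R x \<in> \<Sigma> \<inter> {y. f y \<le> ereal t}"
      using assms(1,2) by (auto simp: cone_def)
    then have "atomic_norm (\<Sigma> \<inter> {y. f y \<le> ereal t}) (s *\<^sub>R (inverse s *\<^sub>R x)) \<le> ereal s"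
      using elim by (intro atomic_norm_le) (auto intro: closure_subset[THEN subsetD] hull_inc)
    with elim r show False by simp
  qed
  then show False by simp
qed

lemma descent_set_atoms_cone_sublevel:
  fixes f :: "'a::real_normed_vector \<Rightarrow> ereal" and t :: real
  defines "L \<equiv> {y. f y \<le> ereal t}"
  assumes cone: "cone \<Sigma>" and cont: "continuous_on UNIV f" and "convex L"
    and "0 < b" "L \<subseteq> cball 0 b" and "0 < e" "ball 0 e \<subseteq> L"
  shows "descent_set_atoms (\<Sigma> \<inter> L) \<Sigma> \<subseteq> pos_scale (descent_set_fun f \<Sigma>)"
proof
  let ?N = "atomic_norm (\<Sigma> \<inter> L)" and ?K = "closure (convex hull (\<Sigma> \<inter> L))"
  have "closed L" unfolding L_def using cont by (intro closed_Collect_le) auto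
  then have KL: "?K \<subseteq> L" using \<open>convex L\<close> by (intro closure_minimal hull_minimal) auto
  have lower: "ereal (norm y / b) \<le> ?N y" for y
    using \<open>L \<subseteq> cball 0 b\<close> \<open>0 < b\<close> by (intro norm_div_le_atomic_norm) auto
  fix z assume "z \<in> descent_set_atoms (\<Sigma> \<inter> L) \<Sigma>"
  then obtain x where x: "x \<in> \<Sigma>" and descent: "?N (x + z) \<le> ?N x"
    unfolding descent_set_atoms_def by blast
  have "0 \<in> \<Sigma>" using cone x unfolding cone_def by (metis order_refl scale_zero_left)
  with \<open>0 < e\<close> \<open>ball 0 e \<subseteq> L\<close> have "0 \<in> \<Sigma> \<inter> L" by auto
  then have "0 \<in> ?K" by (auto intro: closure_subset[THEN subsetD] hull_inc)
  show "z \<in> pos_scale (descent_set_fun f \<Sigma>)"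
  proof (cases "x = 0")
    case True
    have "?N 0 \<le> 0" using atomic_norm_le[OF order_refl \<open>0 \<in> ?K\<close>] by (simp add: zero_ereal_def)
    have "ereal (norm z / b) \<le> ?N z" by (rule lower)
    also have "\<dots> \<le> ?N 0" using descent True by simp
    also have "\<dots> \<le> ereal 0" using \<open>?N 0 \<le> 0\<close> by (simp add: zero_ereal_def)
    finally have "norm z / b \<le> 0" by simp
    with \<open>0 < b\<close> have "z = 0" by (simp add: divide_le_0_iff)
    moreover have "0 \<in> descent_set_fun f \<Sigma>"
      unfolding descent_set_fun_def using \<open>0 \<in> \<Sigma>\<close> by auto
    ultimately show ?thesis unfolding pos_scale_def by (force intro: exI[of _ 1])
  next
    case False
    obtain r where r: "?N x = ereal r"
      using atomic_norm_cone_sublevel_finite[OF cone x \<open>0 < e\<close> \<open>ball 0 e \<subseteq> L\<close>]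
        atomic_norm_nonneg[of "\<Sigma> \<inter> L" x] by (cases "?N x") auto
    have "0 < norm x / b" using False \<open>0 < b\<close> by simp
    also have "\<dots> \<le> r" using lower[of x] r by simp
    finally have "0 < r" .
    let ?x = "inverse r *\<^sub>R x" and ?w = "inverse r *\<^sub>R z"
    have "?x \<in> \<Sigma>" using cone x \<open>0 < r\<close> unfolding cone_def by simp
    have "f ?x \<ge> ereal t"
      using sublevel_ge_at_atomic_norm[OF cone x cont \<open>0 < r\<close>] r unfolding L_def by simp
    moreover have "inverse r *\<^sub>R (x + z) \<in> L"
      using atomic_norm_le_imp_scaled_mem[OF \<open>0 \<in> ?K\<close> \<open>0 < r\<close>] descent r KL by auto
    ultimately have "f (?x + ?w) \<le> f ?x"
      unfolding L_def by (simp add: scaleR_add_right)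
    with \<open>?x \<in> \<Sigma>\<close> have "?w \<in> descent_set_fun f \<Sigma>"
      unfolding descent_set_fun_def by blast
    moreover have "z = r *\<^sub>R ?w" using \<open>0 < r\<close> by simp
    ultimately show ?thesis unfolding pos_scale_def using \<open>0 < r\<close> by blast
  qed
qed

theorem lemma1:
  fixes \<Sigma> :: "'a::{real_inner, complete_space} set"
    and f :: "'a \<Rightarrow> ereal"
  assumes cone: "cone \<Sigma>"
    and proper_not_minf: "\<forall>x. f x \<noteq> -\<infinity>"
    and proper_finite: "\<exists>x. f x \<noteq> \<infinity>"
    and coercive: "(f \<longlongrightarrow> \<infinity>) at_infinity"
    and cont: "continuous_on UNIV f"
    and level: "\<exists>t::real. ereal t > f 0 \<and> convex {y. f y \<le> ereal t}"
  shows "\<exists>A. A \<subseteq> \<Sigma> \<and> descent_set_atoms A \<Sigma> \<subseteq> pos_scale (descent_set_fun f \<Sigma>)"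
proof -
  obtain t :: real where "f 0 < ereal t" and "convex {y. f y \<le> ereal t}"
    using level by blast
  moreover obtain b where "0 < b" "{y. f y \<le> ereal t} \<subseteq> cball 0 b"
    using coercive by (rule coercive_sublevel_bounded)
  moreover obtain e where "0 < e" "ball 0 e \<subseteq> {y. f y \<le> ereal t}"
    using cont \<open>f 0 < ereal t\<close> by (rule sublevel_contains_ball)
  ultimately have "descent_set_atoms (\<Sigma> \<inter> {y. f y \<le> ereal t}) \<Sigma>
      \<subseteq> pos_scale (descent_set_fun f \<Sigma>)"
    using cone cont by (intro descent_set_atoms_cone_sublevel)
  then show ?thesis by blast
qed

end
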